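(* For a plane binary tree $t$ with $k$ nodes let $\tilde\rho=1+\epsilon$ be the dominant singularity of $S_t(z)$. Then \[ (1+\epsilon)^{-n} \sim e^{-n\epsilon} \] as $n\to\infty$, for $k\ge \log_4 n$.
   Context: A plane binary tree is a rooted tree in which each node has a left and a right slot, each empty or holding a subtree. A plane increasing binary tree of size $n$ is such a tree whose $n$ nodes are labeled $1,\dots,n$ increasingly along every path from the root. A fringe subtree is a node with all its descendants; its shape is obtained by forgetting labels. For $t$ with $k$ nodes, $w(t)=\ell(t)/k!$ where $\ell(t)$ is the number of increasing labelings of $t$. $S_t$ is the exponential generating function of plane increasing binary trees with no fringe subtree of shape $t$, the power series solution of $S_t'=(1+S_t)^2-w(t)kz^{k-1}$, $S_t(0)=0$; one has $S_t=-u'/u$ with $u$ the entire solution of $u''-2u'+(1-w(t)kz^{k-1})u=0$, $u(0)=-1$, $u'(0)=0$, and $\tilde\rho>1$ is the smallest positive zero of $u$. *)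

theory Defs
  imports "HOL-Analysis.Analysis" "HOL-Library.Landau_Symbols"
begin

text \<open>Plane binary trees: each node has a left and right slot, each empty (Tip) or a subtree.\<close>
datatype ptree = Tip | Node ptree ptree

fun tsize :: "ptree \<Rightarrow> nat" where
  "tsize Tip = 0"
| "tsize (Node l r) = Suc (tsize l + tsize r)"

text \<open>Nodes of a tree, addressed by their path from the root (False = left, True = right).\<close>
fun nodes :: "ptree \<Rightarrow> bool list set" where
  "nodes Tip = {}"
| "nodes (Node l r) = insert [] ((\<lambda>p. False # p) ` nodes l \<union> (\<lambda>p. True # p) ` nodes r)"

definition incr_labelings :: "ptree \<Rightarrow> (bool list \<Rightarrow> nat) set" where
  "incr_labelings t = {f. bij_betw f (nodes t) {1..tsize t}
      \<and> (\<forall>p b. p \<in> nodes t \<longrightarrow> p @ [b] \<in> nodes t \<longrightarrow> f p < f (p @ [b]))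
      \<and> (\<forall>p. p \<notin> nodes t \<longrightarrow> f p = 0)}"

definition num_labelings :: "ptree \<Rightarrow> nat" where
  "num_labelings t = card (incr_labelings t)"

definition wt :: "ptree \<Rightarrow> real" where
  "wt t = real (num_labelings t) / fact (tsize t)"

definition is_u :: "ptree \<Rightarrow> (real \<Rightarrow> real) \<Rightarrow> bool" where
  "is_u t u \<longleftrightarrow> (\<exists>u'. (\<forall>x. (u has_real_derivative u' x) (at x)
       \<and> (u' has_real_derivative
            (2 * u' x - (1 - wt t * real (tsize t) * x ^ (tsize t - 1)) * u x)) (at x))
     \<and> u 0 = -1 \<and> u' 0 = 0)"

definition u_fun :: "ptree \<Rightarrow> real \<Rightarrow> real" where
  "u_fun t = (THE u. is_u t u)"

definition rho_tilde :: "ptree \<Rightarrow> real" where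
  "rho_tilde t = Inf {x. x > 0 \<and> u_fun t x = 0}"

definition eps :: "ptree \<Rightarrow> real" where
  "eps t = rho_tilde t - 1"

end

theory Submission
  imports Defs "HOL-Real_Asymp.Real_Asymp"
begin

text \<open>
  The weight \<open>w(t) = \<ell>(t)/k!\<close> decays exponentially: restricting an increasing labeling to the
  two subtrees of the root gives \<open>\<ell>(Node l r) \<le> C(a+b, a) \<ell>(l) \<ell>(r)\<close>, whence
  \<open>w(t) \<le> 5/4 (k+1) (5/12)\<^sup>k\<close>. Writing \<open>u = e\<^sup>x v\<close>, the function \<open>v\<close> solves \<open>v'' = c x\<^sup>k\<^sup>-\<^sup>1 v\<close>
  with \<open>c = k w(t)\<close>, \<open>v(0) = -1\<close>, \<open>v'(0) = 1\<close>; for small \<open>c\<close> it stays within \<open>O(c)\<close> of its tangent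
  \<open>x - 1\<close> on \<open>[0, 3/2]\<close>, so its first positive zero \<open>1 + \<epsilon>\<close> has \<open>|\<epsilon>| = O(k\<^sup>2 (5/12)\<^sup>k)\<close>.
  If \<open>k \<ge> log\<^sub>4 n\<close> then \<open>n \<le> 4\<^sup>k\<close>, so \<open>n \<epsilon>\<^sup>2 \<rightarrow> 0\<close> and
  \<open>(1 + \<epsilon>)\<^sup>-\<^sup>n exp (n \<epsilon>) = exp (n (\<epsilon> - ln (1 + \<epsilon>))) = exp (O(n \<epsilon>\<^sup>2)) \<rightarrow> 1\<close>.
\<close>

section \<open>Increasing labelings and the weight\<close>

text \<open>The labels of a subtree form an arbitrary set, so labelings are counted onto any set \<open>A\<close>.\<close>
definition incr_labelings_onto :: "ptree \<Rightarrow> nat set \<Rightarrow> (bool list \<Rightarrow> nat) set" where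
  "incr_labelings_onto t A = {f. bij_betw f (nodes t) A
      \<and> (\<forall>p b. p \<in> nodes t \<longrightarrow> p @ [b] \<in> nodes t \<longrightarrow> f p < f (p @ [b]))
      \<and> (\<forall>p. p \<notin> nodes t \<longrightarrow> f p = 0)}"

lemma incr_labelings_eq_onto: "incr_labelings t = incr_labelings_onto t {1..tsize t}"
  unfolding incr_labelings_def incr_labelings_onto_def by simp

lemma finite_nodes: "finite (nodes t)"
  by (induction t) auto

lemma card_nodes: "card (nodes t) = tsize t"
proof (induction t)
  case Tip
  then show ?case by simp
next
  case (Node l r)
  have "card (Cons False ` nodes l \<union> Cons True ` nodes r) = card (nodes l) + card (nodes r)"
    using finite_nodes by (subst card_Un_disjoint) (auto simp: card_image)
  moreover have "[] \<notin> Cons False ` nodes l \<union> Cons True ` nodes r" by auto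
  ultimately show ?case using Node finite_nodes by simp
qed

lemma nodes_snoc_imp_nodes: "p @ [b] \<in> nodes t \<Longrightarrow> p \<in> nodes t"
proof (induction t arbitrary: p)
  case Tip
  then show ?case by simp
next
  case (Node l r)
  then show ?case by (cases p) (auto split: if_splits)
qed

lemma incr_labelings_ontoD:
  assumes "f \<in> incr_labelings_onto t A"
  shows "bij_betw f (nodes t) A"
    and "\<And>p b. p \<in> nodes t \<Longrightarrow> p @ [b] \<in> nodes t \<Longrightarrow> f p < f (p @ [b])"
    and "\<And>p. p \<notin> nodes t \<Longrightarrow> f p = 0"
  using assms unfolding incr_labelings_onto_def by auto

lemma card_eq_tsize_if_incr_labelings_onto:
  "f \<in> incr_labelings_onto t A \<Longrightarrow> card A = tsize t"
  using bij_betw_same_card incr_labelings_ontoD(1) card_nodes by metis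

lemma incr_labelings_onto_root_less:
  assumes f: "f \<in> incr_labelings_onto t A" and p: "p \<in> nodes t" "p \<noteq> []"
  shows "f [] < f p"
  using p
proof (induction p rule: rev_induct)
  case Nil
  then show ?case by simp
next
  case (snoc b q)
  have q: "q \<in> nodes t" using snoc.prems nodes_snoc_imp_nodes by blast
  have "f q < f (q @ [b])" using incr_labelings_ontoD(2)[OF f q] snoc.prems by blast
  then show ?case using snoc.IH q by (cases "q = []") auto
qed

lemma incr_labelings_onto_root_eq_Min:
  assumes f: "f \<in> incr_labelings_onto t A" and t: "t \<noteq> Tip"
  shows "f [] = Min A"
proof (rule Min_eqI[symmetric])
  have A: "A = f ` nodes t" using incr_labelings_ontoD(1)[OF f] by (simp add: bij_betw_def)
  then show "finite A" using finite_nodes by simp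
  show "f [] \<in> A" using A t by (cases t) auto
  fix y assume "y \<in> A"
  then obtain p where "p \<in> nodes t" "y = f p" using A by blast
  then show "f [] \<le> y" using incr_labelings_onto_root_less[OF f, of p] by (cases "p = []") auto
qed

lemma finite_incr_labelings_onto:
  assumes "finite A" shows "finite (incr_labelings_onto t A)"
proof -
  have "inj_on (\<lambda>f. restrict f (nodes t)) (incr_labelings_onto t A)"
    by (rule inj_onI) (metis incr_labelings_ontoD(3) restrict_apply' ext)
  moreover have "(\<lambda>f. restrict f (nodes t)) ` incr_labelings_onto t A \<subseteq> PiE (nodes t) (\<lambda>_. A)"
    unfolding incr_labelings_onto_def bij_betw_def by auto
  moreover have "finite (PiE (nodes t) (\<lambda>_. A))"
    using assms finite_nodes by (intro finite_PiE) auto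
  ultimately show ?thesis using finite_imageD finite_subset by blast
qed

lemma incr_labelings_onto_subtree:
  assumes f: "f \<in> incr_labelings_onto t A" and sub: "\<And>p. b # p \<in> nodes t \<longleftrightarrow> p \<in> nodes s"
  shows "(\<lambda>p. f (b # p)) \<in> incr_labelings_onto s (f ` Cons b ` nodes s)"
proof -
  have "inj_on f (Cons b ` nodes s)"
    using incr_labelings_ontoD(1)[OF f] sub by (auto simp: bij_betw_def intro: inj_on_subset)
  then have "bij_betw (\<lambda>p. f (b # p)) (nodes s) (f ` Cons b ` nodes s)"
    by (auto simp: bij_betw_def inj_on_def image_image)
  moreover have "f (b # p) < f (b # p @ [c])" if "p \<in> nodes s" "p @ [c] \<in> nodes s" for p c
    using incr_labelings_ontoD(2)[OF f, of "b # p" c] that sub by simp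
  ultimately show ?thesis
    using incr_labelings_ontoD(3)[OF f] sub unfolding incr_labelings_onto_def by auto
qed

lemma incr_labelings_onto_Node_split:
  assumes f: "f \<in> incr_labelings_onto (Node l r) A"
  defines "S \<equiv> f ` Cons False ` nodes l"
  shows "S \<subseteq> A - {Min A}" and "card S = tsize l"
    and "(\<lambda>p. f (False # p)) \<in> incr_labelings_onto l S"
    and "(\<lambda>p. f (True # p)) \<in> incr_labelings_onto r (A - {Min A} - S)"
proof -
  have inj: "inj_on f (nodes (Node l r))" and A: "A = f ` nodes (Node l r)"
    using incr_labelings_ontoD(1)[OF f] by (auto simp: bij_betw_def)
  have root: "f [] = Min A" using incr_labelings_onto_root_eq_Min[OF f] by simp
  have "f ` Cons True ` nodes r = f ` nodes (Node l r) - {f []} - f ` Cons False ` nodes l"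
    by (auto simp: inj_on_eq_iff[OF inj])
  then have right: "f ` Cons True ` nodes r = A - {Min A} - S"
    unfolding A S_def root .
  show "(\<lambda>p. f (False # p)) \<in> incr_labelings_onto l S"
    unfolding S_def by (rule incr_labelings_onto_subtree[OF f]) auto
  then show "card S = tsize l" using card_eq_tsize_if_incr_labelings_onto by blast
  show "(\<lambda>p. f (True # p)) \<in> incr_labelings_onto r (A - {Min A} - S)"
    unfolding right[symmetric] by (rule incr_labelings_onto_subtree[OF f]) auto
  have "f [] \<notin> S" using inj unfolding S_def by (auto dest: inj_onD)
  moreover have "S \<subseteq> A" unfolding S_def A by auto
  ultimately show "S \<subseteq> A - {Min A}" unfolding root by auto
qed

lemma card_incr_labelings_onto_Node_le:
  assumes "finite A"
  defines "A' \<equiv> A - {Min A}"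
  shows "card (incr_labelings_onto (Node l r) A) \<le>
    (\<Sum>S | S \<subseteq> A' \<and> card S = tsize l.
       card (incr_labelings_onto l S) * card (incr_labelings_onto r (A' - S)))"
proof -
  define Subs where "Subs = {S. S \<subseteq> A' \<and> card S = tsize l}"
  define Tgt where "Tgt = (SIGMA S:Subs. incr_labelings_onto l S \<times> incr_labelings_onto r (A' - S))"
  define split where "split f = (f ` Cons False ` nodes l, \<lambda>p. f (False # p), \<lambda>p. f (True # p))"
    for f :: "bool list \<Rightarrow> nat"
  have finA': "finite A'" using assms by (simp add: A'_def)
  have finSubs: "finite Subs" unfolding Subs_def using finA' by simp
  have fin_fibres: "\<forall>S\<in>Subs. finite (incr_labelings_onto l S \<times> incr_labelings_onto r (A' - S))"
    unfolding Subs_def using finA' by (auto intro: finite_incr_labelings_onto rev_finite_subset)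
  have "inj_on split (incr_labelings_onto (Node l r) A)"
  proof (rule inj_onI, rule ext)
    fix f g p
    assume f: "f \<in> incr_labelings_onto (Node l r) A" and g: "g \<in> incr_labelings_onto (Node l r) A"
      and "split f = split g"
    then have "f (b # q) = g (b # q)" for b q
      unfolding split_def by (cases b) (auto dest: fun_cong)
    moreover have "f [] = g []"
      using incr_labelings_onto_root_eq_Min[OF f] incr_labelings_onto_root_eq_Min[OF g] by simp
    ultimately show "f p = g p" by (cases p) auto
  qed
  moreover have "split ` incr_labelings_onto (Node l r) A \<subseteq> Tgt"
  proof
    fix x assume "x \<in> split ` incr_labelings_onto (Node l r) A"
    then obtain f where f: "f \<in> incr_labelings_onto (Node l r) A" and x: "x = split f" by blast
    show "x \<in> Tgt"
      unfolding x split_def Tgt_def Subs_def A'_def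
      using incr_labelings_onto_Node_split[OF f] by auto
  qed
  moreover have "finite Tgt" unfolding Tgt_def using finSubs fin_fibres by blast
  ultimately have "card (incr_labelings_onto (Node l r) A) \<le> card Tgt"
    by (rule card_inj_on_le)
  also have "card Tgt = (\<Sum>S\<in>Subs. card (incr_labelings_onto l S) * card (incr_labelings_onto r (A' - S)))"
    unfolding Tgt_def using card_SigmaI[OF finSubs fin_fibres] by (simp add: card_cartesian_product)
  finally show ?thesis unfolding Subs_def .
qed

definition wt_majorant :: "nat \<Rightarrow> real" where
  "wt_majorant k = (if k = 0 then 1 else 5/4 * (real k + 1) * (5/12) ^ k)"

lemma wt_majorant_nonneg: "0 \<le> wt_majorant k"
  unfolding wt_majorant_def by simp

lemma wt_majorant_le_Suc: "wt_majorant a \<le> (real a + 1) * wt_majorant (Suc a)"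
proof (cases "a = 0")
  case False
  then have "1 \<le> (real a + 2) * (5/12)" by simp
  then have "5/4 * (real a + 1) * (5/12) ^ a * 1 \<le> 5/4 * (real a + 1) * (5/12) ^ a * ((real a + 2) * (5/12))"
    by (intro mult_left_mono) auto
  also have "\<dots> = (real a + 1) * (5/4 * (real (Suc a) + 1) * (5/12) ^ Suc a)"
    by (simp add: mult_ac) (simp add: algebra_simps)
  finally show ?thesis using False unfolding wt_majorant_def by simp
qed (simp add: wt_majorant_def)

lemma wt_majorant_mult_le: "wt_majorant a * wt_majorant b \<le> (real (a + b) + 1) * wt_majorant (a + b + 1)"
proof -
  consider "b = 0" | "a = 0" | "a \<ge> 1" "b \<ge> 1" by linarith
  then show ?thesis
  proof cases
    case 1
    then show ?thesis using wt_majorant_le_Suc[of a] by (simp add: wt_majorant_def)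
  next
    case 2
    then show ?thesis using wt_majorant_le_Suc[of b] by (simp add: wt_majorant_def)
  next
    case 3
    have "1 \<le> real a * real b" using 3 by (simp add: Suc_le_eq flip: of_nat_mult)
    moreover have "0 \<le> (real a - real b) ^ 2" by simp
    ultimately have "3 * (real a + 1) * (real b + 1) \<le> (real a + real b + 1) * (real a + real b + 2)"
      by (simp add: algebra_simps power2_eq_square)
    then have ineq: "5/4 * (real a + 1) * (real b + 1) \<le> (real a + real b + 1) * (real a + real b + 2) * (5/12)"
      by (simp add: algebra_simps)
    have "wt_majorant a * wt_majorant b = 5/4 * (5/12) ^ (a + b) * (5/4 * (real a + 1) * (real b + 1))"
      using 3 by (simp add: wt_majorant_def power_add mult_ac)
    also have "\<dots> \<le> 5/4 * (5/12) ^ (a + b) * ((real a + real b + 1) * (real a + real b + 2) * (5/12))"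
      using ineq by (intro mult_left_mono) auto
    also have "\<dots> = (real (a + b) + 1) * wt_majorant (a + b + 1)"
      by (simp add: wt_majorant_def mult_ac)
    finally show ?thesis .
  qed
qed

lemma card_incr_labelings_onto_le:
  "real (card (incr_labelings_onto t A)) \<le> fact (tsize t) * wt_majorant (tsize t)"
proof (induction t arbitrary: A)
  case Tip
  have "incr_labelings_onto Tip A \<subseteq> {\<lambda>_. 0}" unfolding incr_labelings_onto_def by auto
  then have "card (incr_labelings_onto Tip A) \<le> card {\<lambda>_::bool list. 0::nat}"
    by (intro card_mono) auto
  then show ?case by (simp add: wt_majorant_def)
next
  case (Node l r)
  define a where "a = tsize l"
  define b where "b = tsize r"
  show ?case
  proof (cases "incr_labelings_onto (Node l r) A = {}")
    case False
    then obtain f where f: "f \<in> incr_labelings_onto (Node l r) A" by blast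
    then have cardA: "card A = a + b + 1"
      using card_eq_tsize_if_incr_labelings_onto by (simp add: a_def b_def)
    then have finA: "finite A" by (simp add: card_ge_0_finite)
    define A' where "A' = A - {Min A}"
    have finA': "finite A'" using finA by (simp add: A'_def)
    have cardA': "card A' = a + b"
      using cardA finA unfolding A'_def by (subst card_Diff_singleton) (auto intro: Min_in)
    define Subs where "Subs = {S. S \<subseteq> A' \<and> card S = a}"
    have "real (card (incr_labelings_onto (Node l r) A))
        \<le> (\<Sum>S\<in>Subs. real (card (incr_labelings_onto l S)) * real (card (incr_labelings_onto r (A' - S))))"
      using card_incr_labelings_onto_Node_le[OF finA, of l r]
      unfolding Subs_def A'_def a_def by (simp flip: of_nat_mult of_nat_sum)
    also have "\<dots> \<le> (\<Sum>S\<in>Subs. (fact a * wt_majorant a) * (fact b * wt_majorant b))"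
      by (intro sum_mono mult_mono Node.IH[folded a_def b_def]) (simp_all add: wt_majorant_nonneg)
    also have "\<dots> = real ((a + b) choose a) * (fact a * fact b) * (wt_majorant a * wt_majorant b)"
      using n_subsets[OF finA', of a] cardA' by (simp add: Subs_def algebra_simps)
    also have "real ((a + b) choose a) * (fact a * fact b) = fact (a + b)"
      using binomial_fact[of a "a + b", where 'a = real] by (simp add: field_simps)
    also have "fact (a + b) * (wt_majorant a * wt_majorant b)
        \<le> fact (a + b) * ((real (a + b) + 1) * wt_majorant (a + b + 1))"
      by (intro mult_left_mono wt_majorant_mult_le) auto
    also have "\<dots> = fact (tsize (Node l r)) * wt_majorant (tsize (Node l r))"
      by (simp add: a_def b_def algebra_simps)
    finally show ?thesis .
  qed (simp add: wt_majorant_nonneg)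
qed

lemma wt_le_majorant: "wt t \<le> wt_majorant (tsize t)"
  using card_incr_labelings_onto_le[of t "{1..tsize t}"]
  unfolding wt_def num_labelings_def incr_labelings_eq_onto by (simp add: divide_le_eq mult.commute)

section \<open>The function \<open>u\<close>\<close>

lemma power_div_fact_le_exp:
  fixes x :: real
  assumes "0 \<le> x"
  shows "x ^ n / fact n \<le> exp x"
proof -
  have "(\<Sum>i\<in>{n}. x ^ i /\<^sub>R fact i) \<le> (\<Sum>i. x ^ i /\<^sub>R fact i)"
    using exp_converges[of x] assms by (intro sum_le_suminf) (auto simp: sums_iff)
  then show ?thesis using exp_converges[of x] by (simp add: sums_iff divide_inverse mult.commute)
qed

text \<open>Taylor coefficients at 0 of the solution of \<open>v'' = c x\<^sup>k\<^sup>-\<^sup>1 v\<close>, \<open>v 0 = -1\<close>, \<open>v' 0 = 1\<close>.\<close>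
fun ode_coeff :: "nat \<Rightarrow> real \<Rightarrow> nat \<Rightarrow> real" where
  "ode_coeff k c 0 = -1"
| "ode_coeff k c (Suc 0) = 1"
| "ode_coeff k c (Suc (Suc j)) =
    (if k \<le> Suc j then c * ode_coeff k c (Suc j - k) / (real (Suc (Suc j)) * real (Suc j)) else 0)"

lemma abs_ode_coeff_le:
  assumes "1 \<le> k" and "0 \<le> c"
  shows "\<bar>ode_coeff k c j\<bar> \<le> c ^ (j div (k + 1)) / fact (j div (k + 1))"
  using assms
proof (induction k c j rule: ode_coeff.induct)
  case (3 k c j)
  note c = \<open>0 \<le> c\<close>
  show ?case
  proof (cases "k \<le> Suc j")
    case True
    define m where "m = (Suc j - k) div (k + 1)"
    have "Suc (Suc j) div (k + 1) = (Suc j - k + (k + 1)) div (k + 1)"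
      using True by (simp add: Suc_diff_le)
    also have "\<dots> = Suc m" unfolding m_def by (subst div_add_self2) auto
    finally have div: "Suc (Suc j) div (k + 1) = Suc m" .
    have "m \<le> Suc j" unfolding m_def by (meson div_le_dividend diff_le_self le_trans)
    then have "real (Suc m) \<le> real (Suc (Suc j))" by simp
    also have "\<dots> \<le> real (Suc (Suc j)) * real (Suc j)" by simp
    finally have m_le: "real (Suc m) \<le> real (Suc (Suc j)) * real (Suc j)" .
    have "\<bar>ode_coeff k c (Suc (Suc j))\<bar> = c * \<bar>ode_coeff k c (Suc j - k)\<bar> / (real (Suc (Suc j)) * real (Suc j))"
      using True c by (simp add: abs_mult)
    also have "\<dots> \<le> c * (c ^ m / fact m) / (real (Suc (Suc j)) * real (Suc j))"
      using "3.IH"[OF True "3.prems"] c unfolding m_def by (intro divide_right_mono mult_left_mono) auto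
    also have "\<dots> \<le> c * (c ^ m / fact m) / real (Suc m)"
      using m_le c by (intro divide_left_mono) auto
    also have "\<dots> = c ^ Suc m / fact (Suc m)"
      by (simp add: field_simps)
    finally show ?thesis unfolding div .
  qed simp
qed simp_all

lemma summable_ode_coeff:
  assumes k: "1 \<le> k" and c: "0 \<le> c"
  shows "summable (\<lambda>j. ode_coeff k c j * y ^ j)"
proof (rule summable_comparison_test')
  define d where "d = k + 1"
  define Y where "Y = max 1 \<bar>y\<bar>"
  define Z where "Z = c * Y ^ d * 2 ^ d"
  have Y: "1 \<le> Y" unfolding Y_def by simp
  have Z: "0 \<le> Z" unfolding Z_def using c Y by simp
  show "summable (\<lambda>j. Y ^ d * 2 ^ d * exp Z * (1/2::real) ^ j)"
    by (intro summable_mult summable_geometric) auto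
  fix j
  define m where "m = j div d"
  have jm: "j \<le> d * (m + 1)"
    unfolding m_def d_def using dividend_less_div_times[of "k + 1" j] by (simp add: algebra_simps)
  have "\<bar>y\<bar> ^ j \<le> Y ^ (d * (m + 1))"
  proof -
    have "\<bar>y\<bar> ^ j \<le> Y ^ j" unfolding Y_def by (intro power_mono) auto
    also have "\<dots> \<le> Y ^ (d * (m + 1))" using Y jm by (intro power_increasing) auto
    finally show ?thesis .
  qed
  moreover have "\<bar>ode_coeff k c j\<bar> \<le> c ^ m / fact m"
    using abs_ode_coeff_le[OF k c, of j] unfolding m_def d_def .
  ultimately have "norm (ode_coeff k c j * y ^ j) \<le> (c ^ m / fact m) * Y ^ (d * (m + 1))"
    unfolding real_norm_def abs_mult power_abs by (intro mult_mono) auto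
  also have "\<dots> = Y ^ d * 2 ^ d * (Z ^ m / fact m) * (1/2) ^ (d * (m + 1))"
  proof -
    have "(2::real) ^ d * (2 ^ d) ^ m * (1/2) ^ (d * (m + 1)) = 1"
      by (simp add: power_add power_one_over power_mult)
    then show ?thesis unfolding Z_def by (simp add: power_mult_distrib power_add power_mult mult_ac)
  qed
  also have "\<dots> = (Y ^ d * 2 ^ d) * (Z ^ m / fact m * (1/2) ^ (d * (m + 1)))"
    by (simp only: mult.assoc)
  also have "\<dots> \<le> (Y ^ d * 2 ^ d) * (exp Z * (1/2) ^ j)"
    using power_div_fact_le_exp[OF Z, of m] Y Z jm
    by (intro mult_left_mono mult_mono power_decreasing) auto
  finally show "norm (ode_coeff k c j * y ^ j) \<le> Y ^ d * 2 ^ d * exp Z * (1/2) ^ j"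
    by (simp only: mult.assoc)
qed

definition ode_sol :: "nat \<Rightarrow> real \<Rightarrow> real \<Rightarrow> real" where
  "ode_sol k c x = (\<Sum>j. ode_coeff k c j * x ^ j)"

definition ode_sol' :: "nat \<Rightarrow> real \<Rightarrow> real \<Rightarrow> real" where
  "ode_sol' k c x = (\<Sum>j. diffs (ode_coeff k c) j * x ^ j)"

lemma ode_sol_0: "ode_sol k c 0 = -1"
  unfolding ode_sol_def using powser_zero[of "ode_coeff k c"] by simp

lemma ode_sol'_0: "ode_sol' k c 0 = 1"
  unfolding ode_sol'_def using powser_zero[of "diffs (ode_coeff k c)"] by (simp add: diffs_def)

context
  fixes k :: nat and c :: real
  assumes k: "1 \<le> k" and c: "0 \<le> c"
begin

lemma has_real_derivative_ode_sol: "(ode_sol k c has_real_derivative ode_sol' k c x) (at x)"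
  unfolding ode_sol_def[abs_def] ode_sol'_def
  by (rule termdiffs_strong_converges_everywhere) (rule summable_ode_coeff[OF k c])

lemma has_real_derivative_ode_sol':
  "(ode_sol' k c has_real_derivative c * x ^ (k - 1) * ode_sol k c x) (at x)"
proof -
  define h where "h j = diffs (diffs (ode_coeff k c)) j * x ^ j" for j
  have "(ode_sol' k c has_real_derivative suminf h) (at x)"
    unfolding ode_sol'_def[abs_def] h_def
    by (rule termdiffs_strong_converges_everywhere)
      (rule termdiff_converges_all, rule summable_ode_coeff[OF k c])
  moreover have "h sums (c * x ^ (k - 1) * ode_sol k c x)"
  proof -
    have shift: "h (i + (k - 1)) = c * x ^ (k - 1) * (ode_coeff k c i * x ^ i)" for i
    proof -
      have "k \<le> Suc (i + (k - 1))" "Suc (i + (k - 1)) - k = i" using k by auto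
      then have "h (i + (k - 1)) = c * ode_coeff k c i * x ^ (i + (k - 1))"
        by (simp add: h_def diffs_def field_simps del: of_nat_Suc)
      then show ?thesis by (simp add: power_add)
    qed
    have "(\<lambda>i. c * x ^ (k - 1) * (ode_coeff k c i * x ^ i)) sums (c * x ^ (k - 1) * ode_sol k c x)"
      unfolding ode_sol_def by (intro sums_mult summable_sums summable_ode_coeff[OF k c])
    moreover have "(\<Sum>i<k - 1. h i) = 0"
      by (intro sum.neutral) (auto simp: h_def diffs_def)
    ultimately show ?thesis using sums_iff_shift[of h "k - 1"] shift by simp
  qed
  ultimately show ?thesis by (simp add: sums_iff)
qed

end

lemma gronwall_zero:
  fixes E E' :: "real \<Rightarrow> real"
  assumes deriv: "\<And>y. (E has_real_derivative E' y) (at y)"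
    and E0: "E 0 = 0" and nonneg: "\<And>y. 0 \<le> E y"
    and bound: "\<And>y. \<bar>y\<bar> \<le> \<bar>z\<bar> \<Longrightarrow> \<bar>E' y\<bar> \<le> K * E y"
  shows "E z = 0"
proof (cases "0 \<le> z")
  case True
  have "E z * exp (- K * z) \<le> E 0 * exp (- K * 0)"
  proof (rule DERIV_nonpos_imp_nonincreasing[where f = "\<lambda>y. E y * exp (- K * y)", OF True])
    fix y assume y: "0 \<le> y" "y \<le> z"
    have "((\<lambda>y. E y * exp (- K * y)) has_real_derivative (E' y - K * E y) * exp (- K * y)) (at y)"
      by (auto intro!: derivative_eq_intros deriv simp: algebra_simps)
    moreover have "(E' y - K * E y) * exp (- K * y) \<le> 0"
      using bound[of y] y by (intro mult_nonpos_nonneg) auto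
    ultimately show "\<exists>D. ((\<lambda>y. E y * exp (- K * y)) has_real_derivative D) (at y) \<and> D \<le> 0"
      by blast
  qed
  then show ?thesis using E0 nonneg[of z] by (simp add: mult_le_0_iff)
next
  case False
  have "E z * exp (K * z) \<le> E 0 * exp (K * 0)"
  proof (rule DERIV_nonneg_imp_nondecreasing[where f = "\<lambda>y. E y * exp (K * y)"])
    show "z \<le> 0" using False by simp
    fix y assume y: "z \<le> y" "y \<le> 0"
    have "((\<lambda>y. E y * exp (K * y)) has_real_derivative (E' y + K * E y) * exp (K * y)) (at y)"
      by (auto intro!: derivative_eq_intros deriv simp: algebra_simps)
    moreover have "0 \<le> (E' y + K * E y) * exp (K * y)"
      using bound[of y] y by (intro mult_nonneg_nonneg) auto
    ultimately show "\<exists>D. ((\<lambda>y. E y * exp (K * y)) has_real_derivative D) (at y) \<and> 0 \<le> D"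
      by blast
  qed
  then show ?thesis using E0 nonneg[of z] by (simp add: mult_le_0_iff)
qed

lemma continuous_on_UNIV_bounded_on_interval:
  fixes f :: "real \<Rightarrow> real"
  assumes "continuous_on UNIV f"
  obtains B where "\<And>y. \<bar>y\<bar> \<le> r \<Longrightarrow> \<bar>f y\<bar> \<le> B"
proof -
  have "bounded (f ` cball 0 r)"
    by (intro compact_imp_bounded compact_continuous_image continuous_on_subset[OF assms]) auto
  then obtain B where "\<forall>x\<in>f ` cball 0 r. norm x \<le> B" by (auto simp: bounded_iff)
  then show ?thesis by (intro that[of B]) (auto simp: mem_cball_0)
qed

lemma linear_ode2_zero_unique:
  fixes d d' p q :: "real \<Rightarrow> real"
  assumes p: "continuous_on UNIV p" and q: "continuous_on UNIV q"
    and d: "\<And>y. (d has_real_derivative d' y) (at y)"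
    and d': "\<And>y. (d' has_real_derivative p y * d' y + q y * d y) (at y)"
    and "d 0 = 0" and "d' 0 = 0"
  shows "d z = 0"
proof -
  obtain P where P: "\<And>y. \<bar>y\<bar> \<le> \<bar>z\<bar> \<Longrightarrow> \<bar>p y\<bar> \<le> P"
    using continuous_on_UNIV_bounded_on_interval[OF p] by blast
  obtain Q where Q: "\<And>y. \<bar>y\<bar> \<le> \<bar>z\<bar> \<Longrightarrow> \<bar>q y\<bar> \<le> Q"
    using continuous_on_UNIV_bounded_on_interval[OF q] by blast
  define E where "E y = d y ^ 2 + d' y ^ 2" for y
  have "E z = 0"
  proof (rule gronwall_zero[where E = E and z = z and E' = "\<lambda>y. 2 * (d y * d' y) + 2 * d' y * (p y * d' y + q y * d y)"
        and K = "1 + 2 * P + Q"])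
    show "(E has_real_derivative 2 * (d y * d' y) + 2 * d' y * (p y * d' y + q y * d y)) (at y)" for y
      unfolding E_def[abs_def] by (auto intro!: derivative_eq_intros d d' simp: algebra_simps)
    show "E 0 = 0" using assms by (simp add: E_def)
    show "0 \<le> E y" for y by (simp add: E_def)
    fix y assume y: "\<bar>y\<bar> \<le> \<bar>z\<bar>"
    have dd': "\<bar>2 * (d y * d' y)\<bar> \<le> E y"
      using sum_squares_bound[of "\<bar>d y\<bar>" "\<bar>d' y\<bar>"] by (simp add: E_def abs_mult)
    have "\<bar>2 * d' y * (p y * d' y)\<bar> = 2 * \<bar>p y\<bar> * d' y ^ 2"
      by (simp add: abs_mult power2_eq_square)
    also have "\<dots> \<le> 2 * P * E y"
      using P[OF y] by (intro mult_mono) (auto simp: E_def)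
    finally have pd: "\<bar>2 * d' y * (p y * d' y)\<bar> \<le> 2 * P * E y" .
    have "\<bar>2 * d' y * (q y * d y)\<bar> = \<bar>q y\<bar> * \<bar>2 * (d y * d' y)\<bar>"
      by (simp add: abs_mult)
    also have "\<dots> \<le> Q * E y"
      using Q[OF y] dd' by (intro mult_mono) auto
    finally have qd: "\<bar>2 * d' y * (q y * d y)\<bar> \<le> Q * E y" .
    have "\<bar>2 * (d y * d' y) + 2 * d' y * (p y * d' y + q y * d y)\<bar>
        \<le> \<bar>2 * (d y * d' y)\<bar> + \<bar>2 * d' y * (p y * d' y)\<bar> + \<bar>2 * d' y * (q y * d y)\<bar>"
      unfolding distrib_left by linarith
    then show "\<bar>2 * (d y * d' y) + 2 * d' y * (p y * d' y + q y * d y)\<bar> \<le> (1 + 2 * P + Q) * E y"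
      using dd' pd qd by (simp add: algebra_simps)
  qed
  then show ?thesis by (simp add: E_def add_nonneg_eq_0_iff)
qed

text \<open>The substitution \<open>u = e\<^sup>x v\<close> turns \<open>u'' - 2u' + (1 - w(t) k x\<^sup>k\<^sup>-\<^sup>1) u = 0\<close>
  into \<open>v'' = w(t) k x\<^sup>k\<^sup>-\<^sup>1 v\<close>, and \<open>u(0) = -1\<close>, \<open>u'(0) = 0\<close> into \<open>v(0) = -1\<close>, \<open>v'(0) = 1\<close>.\<close>
lemma is_u_exp_ode_sol:
  assumes k: "1 \<le> tsize t"
  shows "is_u t (\<lambda>x. exp x * ode_sol (tsize t) (wt t * real (tsize t)) x)"
proof -
  define c where "c = wt t * real (tsize t)"
  have c: "0 \<le> c" unfolding c_def wt_def by simp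
  define v where "v = ode_sol (tsize t) c"
  define v' where "v' = ode_sol' (tsize t) c"
  have v: "(v has_real_derivative v' x) (at x)" for x
    unfolding v_def v'_def by (rule has_real_derivative_ode_sol[OF k c])
  have v': "(v' has_real_derivative c * x ^ (tsize t - 1) * v x) (at x)" for x
    unfolding v_def v'_def by (rule has_real_derivative_ode_sol'[OF k c])
  show ?thesis
    unfolding is_u_def c_def[symmetric] v_def[symmetric]
  proof (intro exI[of _ "\<lambda>x. exp x * (v x + v' x)"] conjI allI)
    fix x
    show "((\<lambda>x. exp x * v x) has_real_derivative exp x * (v x + v' x)) (at x)"
      by (auto intro!: derivative_eq_intros v simp: algebra_simps)
    show "((\<lambda>x. exp x * (v x + v' x)) has_real_derivative
        2 * (exp x * (v x + v' x)) - (1 - c * x ^ (tsize t - 1)) * (exp x * v x)) (at x)"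
      by (auto intro!: derivative_eq_intros v v' simp: algebra_simps)
  next
    show "exp 0 * v 0 = -1" "exp 0 * (v 0 + v' 0) = 0"
      using ode_sol_0 ode_sol'_0 by (simp_all add: v_def v'_def)
  qed
qed

lemma is_u_unique:
  assumes "is_u t u\<^sub>1" and "is_u t u\<^sub>2"
  shows "u\<^sub>1 = u\<^sub>2"
proof
  fix z
  define r where "r y = 1 - wt t * real (tsize t) * y ^ (tsize t - 1)" for y
  obtain u\<^sub>1' where u\<^sub>1: "\<And>x. (u\<^sub>1 has_real_derivative u\<^sub>1' x) (at x)"
    "\<And>x. (u\<^sub>1' has_real_derivative 2 * u\<^sub>1' x - r x * u\<^sub>1 x) (at x)" "u\<^sub>1 0 = -1" "u\<^sub>1' 0 = 0"
    using assms(1) unfolding is_u_def r_def by blast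
  obtain u\<^sub>2' where u\<^sub>2: "\<And>x. (u\<^sub>2 has_real_derivative u\<^sub>2' x) (at x)"
    "\<And>x. (u\<^sub>2' has_real_derivative 2 * u\<^sub>2' x - r x * u\<^sub>2 x) (at x)" "u\<^sub>2 0 = -1" "u\<^sub>2' 0 = 0"
    using assms(2) unfolding is_u_def r_def by blast
  have "u\<^sub>1 z - u\<^sub>2 z = 0"
  proof (rule linear_ode2_zero_unique[where d = "\<lambda>x. u\<^sub>1 x - u\<^sub>2 x" and z = z and p = "\<lambda>_. 2" and q = "\<lambda>y. - r y" and d' = "\<lambda>x. u\<^sub>1' x - u\<^sub>2' x"])
    show "continuous_on UNIV (\<lambda>_::real. 2::real)" "continuous_on UNIV (\<lambda>y. - r y)"
      unfolding r_def by (intro continuous_intros)+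
    show "((\<lambda>x. u\<^sub>1 x - u\<^sub>2 x) has_real_derivative u\<^sub>1' y - u\<^sub>2' y) (at y)" for y
      by (intro derivative_intros u\<^sub>1 u\<^sub>2)
    show "((\<lambda>x. u\<^sub>1' x - u\<^sub>2' x) has_real_derivative 2 * (u\<^sub>1' y - u\<^sub>2' y) + - r y * (u\<^sub>1 y - u\<^sub>2 y)) (at y)" for y
      using DERIV_diff[OF u\<^sub>1(2) u\<^sub>2(2), of y] by (simp add: algebra_simps)
  qed (use u\<^sub>1 u\<^sub>2 in simp_all)
  then show "u\<^sub>1 z = u\<^sub>2 z" by simp
qed

lemma u_fun_eq:
  assumes "1 \<le> tsize t"
  shows "u_fun t = (\<lambda>x. exp x * ode_sol (tsize t) (wt t * real (tsize t)) x)"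
  unfolding u_fun_def using is_u_exp_ode_sol[OF assms] is_u_unique by blast

section \<open>Location of the first zero\<close>

lemma abs_sub_tangent_le:
  fixes v v' v'' :: "real \<Rightarrow> real"
  assumes v: "\<And>y. (v has_real_derivative v' y) (at y)"
    and v': "\<And>y. (v' has_real_derivative v'' y) (at y)"
    and x: "0 \<le> x" and bound: "\<And>y. 0 \<le> y \<Longrightarrow> y \<le> x \<Longrightarrow> \<bar>v'' y\<bar> \<le> B"
  shows "\<bar>v x - (v 0 + v' 0 * x)\<bar> \<le> B * x\<^sup>2"
proof (cases "x = 0")
  case False
  then have x: "0 < x" using x by simp
  have slope: "\<bar>v' y - v' 0\<bar> \<le> B * x" if y: "0 \<le> y" "y \<le> x" for y
  proof (cases "y = 0")
    case False
    then obtain z where z: "0 < z" "z < y" "v' y - v' 0 = (y - 0) * v'' z"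
      using MVT2[of 0 y v' v''] v' y by force
    then have "\<bar>v' y - v' 0\<bar> = y * \<bar>v'' z\<bar>" using y by (simp add: abs_mult)
    also have "\<dots> \<le> x * B" using bound[of z] y z by (intro mult_mono) auto
    finally show ?thesis by (simp add: mult.commute)
  qed (use bound[of 0] x in auto)
  obtain z where z: "0 < z" "z < x"
    "(v x - v' 0 * x) - (v 0 - v' 0 * 0) = (x - 0) * (v' z - v' 0)"
    using MVT2[of 0 x "\<lambda>y. v y - v' 0 * y" "\<lambda>y. v' y - v' 0"] x
    by (force intro!: derivative_eq_intros v)
  then have "v x - (v 0 + v' 0 * x) = x * (v' z - v' 0)" by (simp add: algebra_simps)
  then have "\<bar>v x - (v 0 + v' 0 * x)\<bar> = x * \<bar>v' z - v' 0\<bar>"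
    using x by (simp add: abs_mult)
  also have "\<dots> \<le> x * (B * x)" using slope[of z] z x by (intro mult_left_mono) auto
  finally show ?thesis by (simp add: power2_eq_square mult_ac)
qed simp

lemma Inf_pos_zeros_near_one:
  fixes v :: "real \<Rightarrow> real"
  assumes cont: "continuous_on {0..1 + \<delta>} v" and \<delta>: "0 < \<delta>" "\<delta> \<le> 1"
    and near: "\<And>x. 0 \<le> x \<Longrightarrow> x \<le> 1 + \<delta> \<Longrightarrow> \<bar>v x - (x - 1)\<bar> < \<delta>"
  shows "\<bar>Inf {x. 0 < x \<and> v x = 0} - 1\<bar> \<le> \<delta>"
proof -
  define Z where "Z = {x. 0 < x \<and> v x = 0}"
  have v0: "v 0 < 0" and "0 < v (1 + \<delta>)" using near[of 0] near[of "1 + \<delta>"] \<delta> by auto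
  then obtain z where z: "0 \<le> z" "z \<le> 1 + \<delta>" "v z = 0"
    using IVT'[of v 0 0 "1 + \<delta>"] cont \<delta> by auto
  then have "z \<in> Z" using v0 unfolding Z_def by (cases "z = 0") auto
  moreover have "bdd_below Z" unfolding Z_def by (rule bdd_belowI[of _ 0]) auto
  ultimately have "Inf Z \<le> 1 + \<delta>" using z by (meson cInf_lower order_trans)
  moreover have "1 - \<delta> \<le> Inf Z"
  proof (rule cInf_greatest)
    show "Z \<noteq> {}" using \<open>z \<in> Z\<close> by blast
    fix x assume "x \<in> Z"
    then show "1 - \<delta> \<le> x" using near[of x] \<delta> unfolding Z_def by (cases "x \<le> 1 + \<delta>") auto
  qed
  ultimately show ?thesis unfolding Z_def by auto
qed

lemma Inf_pos_zeros_near_one_if_second_deriv_small: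
  fixes v v' v'' :: "real \<Rightarrow> real" and G \<delta> :: real
  assumes v: "\<And>y. (v has_real_derivative v' y) (at y)"
    and v': "\<And>y. (v' has_real_derivative v'' y) (at y)"
    and "v 0 = -1" and "v' 0 = 1"
    and bound: "\<And>x. 0 \<le> x \<Longrightarrow> x \<le> 1 + \<delta> \<Longrightarrow> \<bar>v'' x\<bar> \<le> G * \<bar>v x\<bar>"
    and \<delta>: "0 < \<delta>" "\<delta> \<le> 1/2" and G: "0 \<le> G" "8 * G < \<delta>"
  shows "\<bar>Inf {x. 0 < x \<and> v x = 0} - 1\<bar> \<le> \<delta>"
proof (rule Inf_pos_zeros_near_one)
  have cont: "continuous_on A v" for A
    using v by (intro continuous_at_imp_continuous_on) (auto intro: DERIV_isCont)
  then show "continuous_on {0..1 + \<delta>} v" .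
  have "\<exists>x\<in>{0..1 + \<delta>}. \<forall>y\<in>{0..1 + \<delta>}. \<bar>v y\<bar> \<le> \<bar>v x\<bar>"
    using \<delta> by (intro continuous_attains_sup continuous_on_rabs cont) auto
  then obtain x\<^sub>m where x\<^sub>m: "x\<^sub>m \<in> {0..1 + \<delta>}"
    and max: "\<And>y. y \<in> {0..1 + \<delta>} \<Longrightarrow> \<bar>v y\<bar> \<le> \<bar>v x\<^sub>m\<bar>" by blast
  define M where "M = \<bar>v x\<^sub>m\<bar>"
  have tangent: "\<bar>v x - (x - 1)\<bar> \<le> 9/4 * (G * M)" if x: "0 \<le> x" "x \<le> 1 + \<delta>" for x
  proof -
    have "\<bar>v'' y\<bar> \<le> G * M" if "0 \<le> y" "y \<le> x" for y
    proof -
      have "\<bar>v'' y\<bar> \<le> G * \<bar>v y\<bar>" using bound that x by simp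
      also have "\<dots> \<le> G * M" unfolding M_def using max[of y] that x G by (intro mult_left_mono) auto
      finally show ?thesis .
    qed
    then have "\<bar>v x - (x - 1)\<bar> \<le> G * M * x\<^sup>2"
      using abs_sub_tangent_le[OF v v' x(1)] assms(3,4) by simp
    also have "\<dots> \<le> G * M * (3/2)\<^sup>2"
      using x \<delta> G by (intro mult_left_mono power_mono) (auto simp: M_def)
    finally show ?thesis by (simp add: power2_eq_square mult_ac)
  qed
  \<comment> \<open>Since \<open>G \<le> 1/16\<close>, the tangent bound at the maximum point gives \<open>M \<le> 1 + 9 M / 64\<close>.\<close>
  have "M \<le> 2"
  proof -
    have "G \<le> 1/16" using G \<delta> by linarith
    then have "G * M \<le> M / 16" using mult_right_mono[of G "1/16" M] by (simp add: M_def)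
    moreover have "M \<le> \<bar>x\<^sub>m - 1\<bar> + \<bar>v x\<^sub>m - (x\<^sub>m - 1)\<bar>" unfolding M_def by linarith
    moreover have "\<bar>x\<^sub>m - 1\<bar> \<le> 1" using x\<^sub>m \<delta> by auto
    ultimately show ?thesis using tangent[of x\<^sub>m] x\<^sub>m by auto
  qed
  then have "G * M \<le> 2 * G" using G by (simp add: mult_left_mono mult.commute)
  then show "\<bar>v x - (x - 1)\<bar> < \<delta>" if "0 \<le> x" "x \<le> 1 + \<delta>" for x
    using tangent[OF that] G by linarith
qed (use \<delta> in auto)

lemma abs_eps_le:
  assumes k: "1 \<le> tsize t" and \<delta>: "0 < \<delta>" "\<delta> \<le> 1/2" "\<delta> * real (tsize t) \<le> 1"
    and small: "24 * (wt t * real (tsize t)) < \<delta>"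
  shows "\<bar>eps t\<bar> \<le> \<delta>"
proof -
  define c where "c = wt t * real (tsize t)"
  have c: "0 \<le> c" unfolding c_def wt_def by simp
  define G where "G = c * (1 + \<delta>) ^ (tsize t - 1)"
  have "(1 + \<delta>) ^ (tsize t - 1) \<le> exp \<delta> ^ (tsize t - 1)"
    using \<delta> by (intro power_mono) (auto simp: exp_ge_add_one_self add.commute)
  also have "\<dots> = exp (real (tsize t - 1) * \<delta>)" by (simp add: exp_of_nat_mult)
  also have "\<dots> \<le> exp 1" using \<delta> k by (auto simp: of_nat_diff algebra_simps)
  also have "\<dots> \<le> 3" by (rule exp_le)
  finally have "G \<le> 3 * c" unfolding G_def using c by (simp add: mult_left_mono mult.commute)
  then have G: "0 \<le> G" "8 * G < \<delta>" using small c unfolding G_def c_def by auto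
  have "\<bar>Inf {x. 0 < x \<and> ode_sol (tsize t) c x = 0} - 1\<bar> \<le> \<delta>"
  proof (rule Inf_pos_zeros_near_one_if_second_deriv_small[OF has_real_derivative_ode_sol[OF k c]
        has_real_derivative_ode_sol'[OF k c] ode_sol_0 ode_sol'_0 _ \<delta>(1,2) G])
    fix x :: real assume x: "0 \<le> x" "x \<le> 1 + \<delta>"
    have "c * x ^ (tsize t - 1) \<le> G" unfolding G_def using x c by (intro mult_left_mono power_mono) auto
    then show "\<bar>c * x ^ (tsize t - 1) * ode_sol (tsize t) c x\<bar> \<le> G * \<bar>ode_sol (tsize t) c x\<bar>"
      using x c by (simp add: abs_mult mult_right_mono)
  qed
  then show ?thesis by (simp add: eps_def rho_tilde_def u_fun_eq[OF k] c_def)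
qed

section \<open>Asymptotics\<close>

text \<open>The constant 32 exceeds \<open>24 \<cdot> 5/4\<close>, so that \<open>24 k w(t) < eps_majorant k\<close> as needed in \<open>abs_eps_le\<close>.\<close>
definition eps_majorant :: "nat \<Rightarrow> real" where
  "eps_majorant k = 32 * real k * (real k + 1) * (5/12) ^ k"

lemma eventually_abs_eps_le_majorant:
  "\<forall>\<^sub>F k in sequentially. \<forall>t. tsize t = k \<longrightarrow> \<bar>eps t\<bar> \<le> eps_majorant k"
proof -
  have "((\<lambda>k. eps_majorant k) \<longlongrightarrow> 0) sequentially"
    unfolding eps_majorant_def by real_asymp
  from order_tendstoD(2)[OF this, of "1/2"]
  have "\<forall>\<^sub>F k in sequentially. eps_majorant k < 1/2" by simp
  moreover have "((\<lambda>k. eps_majorant k * real k) \<longlongrightarrow> 0) sequentially"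
    unfolding eps_majorant_def by real_asymp
  from order_tendstoD(2)[OF this, of 1]
  have "\<forall>\<^sub>F k in sequentially. eps_majorant k * real k < 1" by simp
  moreover have "\<forall>\<^sub>F k in sequentially. 1 \<le> k" by (rule eventually_ge_at_top)
  ultimately show ?thesis
  proof eventually_elim
    case (elim k)
    show ?case
    proof (intro allI impI)
      fix t assume t: "tsize t = k"
      have "24 * (wt t * real k) \<le> 24 * (wt_majorant k * real k)"
        using wt_le_majorant[of t] t by (intro mult_left_mono mult_right_mono) auto
      also have "\<dots> = 30 * real k * (real k + 1) * (5/12) ^ k"
        using elim by (simp add: wt_majorant_def)
      also have "\<dots> < eps_majorant k"
        using elim by (simp add: eps_majorant_def)
      finally show "\<bar>eps t\<bar> \<le> eps_majorant k"
        using elim t by (intro abs_eps_le) (auto simp: eps_majorant_def)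
    qed
  qed
qed

lemma tendsto_mult_eps_squared:
  assumes "\<forall>\<^sub>F n in sequentially. log 4 (real n) \<le> real (tsize (t n))"
  shows "((\<lambda>n. real n * eps (t n) ^ 2) \<longlongrightarrow> 0) sequentially"
proof (rule tendsto_sandwich[of "\<lambda>_. 0" _ _ "\<lambda>n. 4 ^ tsize (t n) * eps_majorant (tsize (t n)) ^ 2"])
  have "filterlim (\<lambda>n::nat. log 4 (real n)) at_top sequentially" by real_asymp
  then have "filterlim (\<lambda>n. real (tsize (t n))) at_top sequentially"
    using assms by (rule filterlim_at_top_mono)
  then have size_nat: "filterlim (\<lambda>n. tsize (t n)) at_top sequentially"
    by (simp add: filterlim_sequentially_iff_filterlim_real)
  have "((\<lambda>k. 4 ^ k * eps_majorant k ^ 2) \<longlongrightarrow> 0) sequentially"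
  proof -
    have "(4::real) ^ k * eps_majorant k ^ 2 = 1024 * (real k * (real k + 1)) ^ 2 * (25/36) ^ k" for k
    proof -
      have four: "(4::real) ^ k * ((5/12) ^ k) ^ 2 = (25/36) ^ k"
        by (simp add: power2_eq_square flip: power_mult_distrib)
      show ?thesis by (simp add: eps_majorant_def power_mult_distrib flip: four)
    qed
    moreover have "((\<lambda>k. 1024 * (real k * (real k + 1)) ^ 2 * (25/36) ^ k) \<longlongrightarrow> (0::real)) sequentially"
      by real_asymp
    ultimately show ?thesis by simp
  qed
  then show "((\<lambda>n. 4 ^ tsize (t n) * eps_majorant (tsize (t n)) ^ 2) \<longlongrightarrow> 0) sequentially"
    using filterlim_compose size_nat by blast
  show "\<forall>\<^sub>F n in sequentially. real n * eps (t n) ^ 2 \<le> 4 ^ tsize (t n) * eps_majorant (tsize (t n)) ^ 2"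
    using eventually_compose_filterlim[OF eventually_abs_eps_le_majorant size_nat]
      assms eventually_gt_at_top[of 0]
  proof eventually_elim
    case (elim n)
    have "real n = 4 powr log 4 (real n)" using elim by simp
    also have "\<dots> \<le> 4 powr real (tsize (t n))" using elim by (intro powr_mono) auto
    also have "\<dots> = 4 ^ tsize (t n)" by (simp add: powr_realpow)
    finally have "real n \<le> 4 ^ tsize (t n)" .
    moreover have "eps (t n) ^ 2 \<le> eps_majorant (tsize (t n)) ^ 2"
      using elim by (metis abs_ge_zero power2_abs power_mono)
    ultimately show ?case by (intro mult_mono) auto
  qed
qed simp_all

lemma powr_minus_asymp_equiv_exp:
  fixes e :: "nat \<Rightarrow> real"
  assumes "((\<lambda>n. real n * e n ^ 2) \<longlongrightarrow> 0) sequentially"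
  shows "(\<lambda>n. (1 + e n) powr (- real n)) \<sim>[sequentially] (\<lambda>n. exp (- real n * e n))"
proof (rule asymp_equivI')
  have "\<forall>\<^sub>F n in sequentially. real n * e n ^ 2 < 1/4"
    using order_tendstoD(2)[OF assms, of "1/4"] by simp
  then have small: "\<forall>\<^sub>F n in sequentially. \<bar>e n\<bar> \<le> 1/2"
    using eventually_ge_at_top[of 1]
  proof eventually_elim
    case (elim n)
    then have "e n ^ 2 \<le> 1/4" using mult_right_mono[of 1 "real n" "e n ^ 2"] by simp
    then show ?case using abs_le_square_iff[of "e n" "1/2"] by (simp add: power_divide)
  qed
  have "((\<lambda>n. real n * (e n - ln (1 + e n))) \<longlongrightarrow> 0) sequentially"
  proof (rule Lim_null_comparison)
    show "\<forall>\<^sub>F n in sequentially. norm (real n * (e n - ln (1 + e n))) \<le> 2 * (real n * e n ^ 2)"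
      using small
    proof eventually_elim
      case (elim n)
      then have "\<bar>e n - ln (1 + e n)\<bar> \<le> 2 * e n ^ 2"
        using abs_ln_one_plus_x_minus_x_bound[of "e n"] by (simp add: abs_minus_commute)
      then show ?case by (simp add: abs_mult mult_left_mono mult.left_commute)
    qed
    show "((\<lambda>n. 2 * (real n * e n ^ 2)) \<longlongrightarrow> 0) sequentially"
      using tendsto_mult_right_zero[OF assms] by simp
  qed
  then have "((\<lambda>n. exp (real n * (e n - ln (1 + e n)))) \<longlongrightarrow> 1) sequentially"
    using tendsto_exp by fastforce
  then show "((\<lambda>n. (1 + e n) powr (- real n) / exp (- real n * e n)) \<longlongrightarrow> 1) sequentially"
  proof (rule Lim_transform_eventually)
    show "\<forall>\<^sub>F n in sequentially. exp (real n * (e n - ln (1 + e n))) = (1 + e n) powr (- real n) / exp (- real n * e n)"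
      using small by eventually_elim (simp add: powr_def exp_diff[symmetric] algebra_simps)
  qed
qed

theorem lemma3p10:
  fixes t :: "nat \<Rightarrow> ptree"
  assumes "\<forall>\<^sub>F n in sequentially. log 4 (real n) \<le> real (tsize (t n))"
  shows "(\<lambda>n. (1 + eps (t n)) powr (- real n)) \<sim>[sequentially] (\<lambda>n. exp (- real n * eps (t n)))"
  using powr_minus_asymp_equiv_exp[OF tendsto_mult_eps_squared[OF assms]] .

end
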